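(* Let $(X,\mu)$ be a standard Borel space with a non-atomic Borel probability measure, and let $R_{12},R_{13},R_{23}$ be SP1 equivalence relations on $X$. For $\{i,j,k\}=\{1,2,3\}$ let $R_i=R_{ij}\vee R_{ik}$ (with $R_{ji}=R_{ij}$), and assume $R_i\cap R_j=R_{ij}$ for $i\ne j$; put $R_0=R_{12}\cap R_{13}\cap R_{23}$. Suppose $R=R_1\vee R_2\vee R_3=R_{12}\vee R_{23}\vee R_{13}$ is a minimal triangle join (i.e. with $E_i:=R_i$, $E_1\vee E_2\vee E_3$ is a triangle join over $R_{12},R_{23},R_{13}$). Then $R=R_1\vee R_2$, and \[R=R_1\ast_{R_{12}}R_2\iff R_3=R_{13}\ast_{R_0}R_{23}.\]
   Context: An SP1 equivalence relation on a standard Borel space $X$ with a non-atomic Borel probability measure $\mu$ is an equivalence relation $R\subset X\times X$ that is Borel, has countable classes, and preserves $\mu$. $S\vee T$ denotes the smallest SP equivalence relation containing $S$ and $T$. Free amalgamated join: for SP1 relations $S_1,S_2$ with common subrelation $T$, a sequence $x_1,\dots,x_n$ is reduced if each $(x_k,x_{k+1})$ lies in $S_1$ or $S_2$, successive pairs lie in distinct factors, for $n>2$ no pair lies in $T$, and for $n=2$, $x_1\ne x_2$. $S_1\vee S_2$ is the free amalgamated join $S_1\ast_T S_2$ if every reduced sequence has distinct endpoints (up to a set of measure zero). Triangle join: given SP1 relations $E_1,E_2,E_3$ with $R_{ij}=E_i\cap E_j$, $R_0=E_1\cap E_2\cap E_3$, $R_i=R_{ij}\vee R_{ik}$, $E_i^\circ=E_i\setminus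 R_i$, $R_{ij}^\circ=R_{ij}\setminus R_0$ ($\{i,j,k\}=\{1,2,3\}$): a sequence $x_1,\dots,x_n$ is triangle-reduced if (a) every consecutive pair lies in one of $E_1^\circ,E_2^\circ,E_3^\circ,R_{12}^\circ,R_{13}^\circ,R_{23}^\circ$ (its type); (b) if $(x_k,x_{k+1})\in E_l^\circ$ with $\{i,j,l\}=\{1,2,3\}$, each neighbouring pair (when it exists) lies in $E_i^\circ\sqcup E_j^\circ\sqcup R_{ij}^\circ$; (c) if $(x_k,x_{k+1})\in R_{ij}^\circ$ with $\{i,j,l\}=\{1,2,3\}$, each neighbouring pair (when it exists) lies in $E_l^\circ\sqcup R_{il}^\circ\sqcup R_{jl}^\circ$. It is proper of type I if its set of types contains one of $\{E_1^\circ,R_{23}^\circ\}$, $\{E_2^\circ,R_{13}^\circ\}$, $\{E_3^\circ,R_{12}^\circ\}$, $\{E_1^\circ,E_2^\circ\}$, $\{E_2^\circ,E_3^\circ\}$, $\{E_1^\circ,E_3^\circ\}$; proper of type II if its types include all of $R_{12}^\circ,R_{13}^\circ,R_{23}^\circ$ and none of the $E_i^\circ$. A loop is a sequence with $x_1=x_n$. $E_1\vee E_2\vee E_3$ is a triangle join over $R_{12},R_{23},R_{13}$ if every proper triangle-reduced sequence of type I has distinct endpoints and every proper triangle-reduced loop of type II is a concatenation of $R_i$-loops (closed subsequences whose consecutive pairs all lie in a single $R_i$). It is a minimal triangle join when $E_i=R_i$ for $i=1,2,3$. *)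

theory Defs
  imports "HOL-Probability.Probability"
begin

text \<open>A standard Borel space is modelled as a Polish space (type class polish_space)
  with its Borel sigma-algebra; the measure M lives on exactly these sets.\<close>

definition nonatomic :: "'a measure \<Rightarrow> bool" where
  "nonatomic M \<longleftrightarrow>
     \<not> (\<exists>A\<in>sets M. emeasure M A > 0 \<and>
          (\<forall>B\<in>sets M. B \<subseteq> A \<longrightarrow> emeasure M B = 0 \<or> emeasure M B = emeasure M A))"

definition std_nonatomic_prob :: "('a::polish_space) measure \<Rightarrow> bool" where
  "std_nonatomic_prob M \<longleftrightarrow> sets M = sets borel \<and> prob_space M \<and> nonatomic M"

definition rel_measure_preserving :: "'a measure \<Rightarrow> ('a \<times> 'a) set \<Rightarrow> bool" where
  "rel_measure_preserving M R \<longleftrightarrow>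
     (\<forall>A f. A \<in> sets M \<and> f \<in> M \<rightarrow>\<^sub>M M \<and> inj_on f A \<and> (\<forall>x\<in>A. (x, f x) \<in> R)
        \<longrightarrow> f ` A \<in> sets M \<and> emeasure M (f ` A) = emeasure M A)"

definition SP1 :: "'a measure \<Rightarrow> ('a \<times> 'a) set \<Rightarrow> bool" where
  "SP1 M R \<longleftrightarrow> equiv UNIV R \<and> R \<in> sets (M \<Otimes>\<^sub>M M) \<and> (\<forall>x. countable (R `` {x}))
                \<and> rel_measure_preserving M R"

definition eqjoin :: "('a \<times> 'a) set \<Rightarrow> ('a \<times> 'a) set \<Rightarrow> ('a \<times> 'a) set" where
  "eqjoin S T = (S \<union> T)\<^sup>*"

definition join3 :: "('a \<times> 'a) set \<Rightarrow> ('a \<times> 'a) set \<Rightarrow> ('a \<times> 'a) set \<Rightarrow> ('a \<times> 'a) set" where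
  "join3 S T U = (S \<union> T \<union> U)\<^sup>*"

definition step :: "'a list \<Rightarrow> nat \<Rightarrow> 'a \<times> 'a" where
  "step xs k = (xs ! k, xs ! Suc k)"

definition reduced :: "('a \<times> 'a) set \<Rightarrow> ('a \<times> 'a) set \<Rightarrow> ('a \<times> 'a) set \<Rightarrow> 'a list \<Rightarrow> bool" where
  "reduced S1 S2 T xs \<longleftrightarrow>
     length xs \<ge> 2 \<and>
     (\<exists>lab :: nat \<Rightarrow> bool.
        (\<forall>k < length xs - 1. step xs k \<in> (if lab k then S1 else S2)) \<and>
        (\<forall>k. Suc k < length xs - 1 \<longrightarrow> lab k \<noteq> lab (Suc k))) \<and>
     (length xs > 2 \<longrightarrow> (\<forall>k < length xs - 1. step xs k \<notin> T)) \<and>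
     (length xs = 2 \<longrightarrow> xs ! 0 \<noteq> xs ! 1)"

definition free_amalg :: "'a measure \<Rightarrow> ('a \<times> 'a) set \<Rightarrow> ('a \<times> 'a) set \<Rightarrow> ('a \<times> 'a) set \<Rightarrow> bool" where
  "free_amalg M S1 S2 T \<longleftrightarrow>
     (AE x in M. \<forall>xs. reduced S1 S2 T xs \<and> hd xs = x \<longrightarrow> last xs \<noteq> x)"

definition is_free_join :: "'a measure \<Rightarrow> ('a \<times> 'a) set \<Rightarrow> ('a \<times> 'a) set \<Rightarrow> ('a \<times> 'a) set
    \<Rightarrow> ('a \<times> 'a) set \<Rightarrow> bool" where
  "is_free_join M R S1 S2 T \<longleftrightarrow> R = eqjoin S1 S2 \<and> free_amalg M S1 S2 T"

datatype ttype = TE1 | TE2 | TE3 | TR12 | TR13 | TR23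

definition tri_R0 :: "('a \<times> 'a) set \<Rightarrow> ('a \<times> 'a) set \<Rightarrow> ('a \<times> 'a) set \<Rightarrow> ('a \<times> 'a) set" where
  "tri_R0 E1 E2 E3 = E1 \<inter> E2 \<inter> E3"

definition tri_Ri :: "('a \<times> 'a) set \<Rightarrow> ('a \<times> 'a) set \<Rightarrow> ('a \<times> 'a) set \<Rightarrow> nat \<Rightarrow> ('a \<times> 'a) set" where
  "tri_Ri E1 E2 E3 i =
     (if i = 1 then eqjoin (E1 \<inter> E2) (E1 \<inter> E3)
      else if i = 2 then eqjoin (E1 \<inter> E2) (E2 \<inter> E3)
      else eqjoin (E1 \<inter> E3) (E2 \<inter> E3))"

fun tri_piece :: "('a \<times> 'a) set \<Rightarrow> ('a \<times> 'a) set \<Rightarrow> ('a \<times> 'a) set \<Rightarrow> ttype \<Rightarrow> ('a \<times> 'a) set" where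
  "tri_piece E1 E2 E3 TE1 = E1 - tri_Ri E1 E2 E3 1"
| "tri_piece E1 E2 E3 TE2 = E2 - tri_Ri E1 E2 E3 2"
| "tri_piece E1 E2 E3 TE3 = E3 - tri_Ri E1 E2 E3 3"
| "tri_piece E1 E2 E3 TR12 = (E1 \<inter> E2) - tri_R0 E1 E2 E3"
| "tri_piece E1 E2 E3 TR13 = (E1 \<inter> E3) - tri_R0 E1 E2 E3"
| "tri_piece E1 E2 E3 TR23 = (E2 \<inter> E3) - tri_R0 E1 E2 E3"

text \<open>Allowed neighbours of a pair of a given type (conditions (b) and (c)).\<close>
fun tri_nbr :: "('a \<times> 'a) set \<Rightarrow> ('a \<times> 'a) set \<Rightarrow> ('a \<times> 'a) set \<Rightarrow> ttype \<Rightarrow> ('a \<times> 'a) set" where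
  "tri_nbr E1 E2 E3 TE1 = tri_piece E1 E2 E3 TE2 \<union> tri_piece E1 E2 E3 TE3 \<union> tri_piece E1 E2 E3 TR23"
| "tri_nbr E1 E2 E3 TE2 = tri_piece E1 E2 E3 TE1 \<union> tri_piece E1 E2 E3 TE3 \<union> tri_piece E1 E2 E3 TR13"
| "tri_nbr E1 E2 E3 TE3 = tri_piece E1 E2 E3 TE1 \<union> tri_piece E1 E2 E3 TE2 \<union> tri_piece E1 E2 E3 TR12"
| "tri_nbr E1 E2 E3 TR12 = tri_piece E1 E2 E3 TE3 \<union> tri_piece E1 E2 E3 TR13 \<union> tri_piece E1 E2 E3 TR23"
| "tri_nbr E1 E2 E3 TR13 = tri_piece E1 E2 E3 TE2 \<union> tri_piece E1 E2 E3 TR12 \<union> tri_piece E1 E2 E3 TR23"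
| "tri_nbr E1 E2 E3 TR23 = tri_piece E1 E2 E3 TE1 \<union> tri_piece E1 E2 E3 TR12 \<union> tri_piece E1 E2 E3 TR13"

definition tri_types :: "('a \<times> 'a) set \<Rightarrow> ('a \<times> 'a) set \<Rightarrow> ('a \<times> 'a) set \<Rightarrow> 'a list \<Rightarrow> ttype set" where
  "tri_types E1 E2 E3 xs = {t. \<exists>k < length xs - 1. step xs k \<in> tri_piece E1 E2 E3 t}"

definition tri_reduced :: "('a \<times> 'a) set \<Rightarrow> ('a \<times> 'a) set \<Rightarrow> ('a \<times> 'a) set \<Rightarrow> 'a list \<Rightarrow> bool" where
  "tri_reduced E1 E2 E3 xs \<longleftrightarrow>
     xs \<noteq> [] \<and>
     (\<forall>k < length xs - 1. \<exists>t. step xs k \<in> tri_piece E1 E2 E3 t \<and>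
        (k > 0 \<longrightarrow> step xs (k - 1) \<in> tri_nbr E1 E2 E3 t) \<and>
        (Suc k < length xs - 1 \<longrightarrow> step xs (Suc k) \<in> tri_nbr E1 E2 E3 t))"

definition proper_I :: "('a \<times> 'a) set \<Rightarrow> ('a \<times> 'a) set \<Rightarrow> ('a \<times> 'a) set \<Rightarrow> 'a list \<Rightarrow> bool" where
  "proper_I E1 E2 E3 xs \<longleftrightarrow>
     (let T = tri_types E1 E2 E3 xs in
       {TE1, TR23} \<subseteq> T \<or> {TE2, TR13} \<subseteq> T \<or> {TE3, TR12} \<subseteq> T \<or>
       {TE1, TE2} \<subseteq> T \<or> {TE2, TE3} \<subseteq> T \<or> {TE1, TE3} \<subseteq> T)"

definition proper_II :: "('a \<times> 'a) set \<Rightarrow> ('a \<times> 'a) set \<Rightarrow> ('a \<times> 'a) set \<Rightarrow> 'a list \<Rightarrow> bool" where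
  "proper_II E1 E2 E3 xs \<longleftrightarrow>
     (let T = tri_types E1 E2 E3 xs in
       {TR12, TR13, TR23} \<subseteq> T \<and> TE1 \<notin> T \<and> TE2 \<notin> T \<and> TE3 \<notin> T)"

text \<open>A loop xs is a concatenation of R_i-loops: it is cut at positions
  0 = j_0 < j_1 < ... < j_m = length xs - 1 into closed contiguous pieces,
  each of whose consecutive pairs all lie in a single R_i.\<close>
definition concat_Ri_loops :: "('a \<times> 'a) set \<Rightarrow> ('a \<times> 'a) set \<Rightarrow> ('a \<times> 'a) set \<Rightarrow> 'a list \<Rightarrow> bool" where
  "concat_Ri_loops E1 E2 E3 xs \<longleftrightarrow>
     (\<exists>js :: nat list. length js \<ge> 2 \<and> hd js = 0 \<and> last js = length xs - 1 \<and>
        sorted_wrt (<) js \<and>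
        (\<forall>t < length js - 1. xs ! (js ! t) = xs ! (js ! Suc t) \<and>
           (\<exists>i\<in>{1,2,3::nat}. \<forall>k. js ! t \<le> k \<and> k < js ! Suc t \<longrightarrow> step xs k \<in> tri_Ri E1 E2 E3 i)))"

definition triangle_join :: "'a measure \<Rightarrow> ('a \<times> 'a) set \<Rightarrow> ('a \<times> 'a) set \<Rightarrow> ('a \<times> 'a) set \<Rightarrow> bool" where
  "triangle_join M E1 E2 E3 \<longleftrightarrow>
     (AE x in M. \<forall>xs. tri_reduced E1 E2 E3 xs \<and> proper_I E1 E2 E3 xs \<and> hd xs = x \<longrightarrow> last xs \<noteq> x) \<and>
     (AE x in M. \<forall>xs. tri_reduced E1 E2 E3 xs \<and> proper_II E1 E2 E3 xs \<and> hd xs = x \<and> last xs = x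
                  \<longrightarrow> concat_Ri_loops E1 E2 E3 xs)"

definition minimal_triangle_join :: "'a measure \<Rightarrow> ('a \<times> 'a) set \<Rightarrow> ('a \<times> 'a) set \<Rightarrow> ('a \<times> 'a) set \<Rightarrow> bool" where
  "minimal_triangle_join M E1 E2 E3 \<longleftrightarrow>
     triangle_join M E1 E2 E3 \<and> (\<forall>i\<in>{1,2,3::nat}. [E1, E2, E3] ! (i - 1) = tri_Ri E1 E2 E3 i)"

end

(* R3 is generated by R13 and R23, which lie in R1 and R2, so R is already the join of R1
   and R2. Since R12 meets R13 and R23 only inside R0, a reduced R13/R23-loop is also a reduced
   R1/R2-loop over R12; this gives one implication.

   Conversely, take a reduced R1/R2-loop at x that is shortest and, among the shortest ones,
   minimises the total length of geodesics realising its steps, i.e. shortest chains of R12-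
   and R13-steps (resp. R12- and R23-steps). Substituting these geodesics gives a loop that
   meets x only at its ends and never has two consecutive steps in the same R_ij, since
   otherwise a shorter loop or shorter geodesics would exist. If it uses an R12-step, it is a
   proper triangle-reduced loop of type II that is not a concatenation of R_i-loops; otherwise
   it is a reduced R13/R23-loop. Either way x lies in a null set. *)

theory Submission
  imports Defs
begin

section \<open>Consecutive pairs of a list\<close>

definition pairs :: "'a list \<Rightarrow> ('a \<times> 'a) list" where
  "pairs xs = zip xs (tl xs)"

lemma length_pairs [simp]: "length (pairs xs) = length xs - 1"
  by (simp add: pairs_def)

lemma nth_pairs: "k < length xs - 1 \<Longrightarrow> pairs xs ! k = step xs k"
  by (cases xs) (auto simp: pairs_def step_def)

lemma in_set_pairs: "q \<in> set (pairs xs) \<longleftrightarrow> (\<exists>k < length xs - 1. q = step xs k)"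
  by (auto simp: in_set_conv_nth nth_pairs)

lemma step_in_set_pairs: "k < length xs - 1 \<Longrightarrow> step xs k \<in> set (pairs xs)"
  by (auto simp: in_set_pairs)

lemma pairs_Nil [simp]: "pairs [] = []"
  and pairs_singleton [simp]: "pairs [a] = []"
  and pairs_Cons_Cons [simp]: "pairs (a # b # xs) = (a, b) # pairs (b # xs)"
  by (simp_all add: pairs_def)

lemma pairs_eq_Nil_iff: "pairs xs = [] \<longleftrightarrow> length xs < 2"
  by (simp add: numeral_2_eq_2 less_Suc_eq_le flip: length_0_conv)

lemma pairs_append:
  "xs \<noteq> [] \<Longrightarrow> ys \<noteq> [] \<Longrightarrow> pairs (xs @ ys) = pairs xs @ (last xs, hd ys) # pairs ys"
  by (induction xs rule: induct_list012) (auto simp: neq_Nil_conv)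

lemma hd_pairs: "2 \<le> length xs \<Longrightarrow> hd (pairs xs) = (hd xs, xs ! 1)"
  by (cases xs; cases "tl xs") auto

lemma last_pairs:
  assumes "2 \<le> length xs"
  shows "last (pairs xs) = (xs ! (length xs - 2), last xs)"
proof -
  have "last (pairs xs) = step xs (length xs - 2)"
    using assms by (simp add: last_conv_nth nth_pairs pairs_eq_Nil_iff numeral_2_eq_2)
  moreover have "xs \<noteq> []" using assms by auto
  ultimately show ?thesis
    using assms by (simp add: step_def last_conv_nth Suc_diff_Suc numeral_2_eq_2)
qed

lemma pairs_append_tl:
  "xs \<noteq> [] \<Longrightarrow> ys \<noteq> [] \<Longrightarrow> last xs = hd ys \<Longrightarrow> pairs (xs @ tl ys) = pairs xs @ pairs ys"
  by (cases ys; cases "tl ys") (auto simp: pairs_append)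

lemma pairs_take: "pairs (take n xs) = take (n - 1) (pairs xs)"
  by (rule nth_equalityI) (auto simp: nth_pairs step_def)

lemma pairs_drop: "pairs (drop n xs) = drop n (pairs xs)"
  by (simp add: pairs_def drop_zip drop_tl)

lemma step_list_update:
  assumes "Suc k < length W - 1" "m < length W - 1"
  shows "step (W[Suc k := p]) m =
    (if m = k then (W ! k, p) else if m = Suc k then (p, W ! Suc (Suc k)) else step W m)"
  using assms by (auto simp: step_def nth_list_update)

lemma relpow_iff_pairs:
  "(a, b) \<in> S ^^ m \<longleftrightarrow> (\<exists>c. length c = Suc m \<and> hd c = a \<and> last c = b \<and> set (pairs c) \<subseteq> S)"
proof
  assume "(a, b) \<in> S ^^ m"
  then obtain f where f: "f 0 = a" "f m = b" "\<forall>i<m. (f i, f (Suc i)) \<in> S"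
    unfolding relpow_fun_conv by blast
  let ?c = "map f [0..<Suc m]"
  have "set (pairs ?c) \<subseteq> S"
    using f(3) by (auto simp del: upt_Suc simp: in_set_pairs step_def nth_append)
  moreover have "hd ?c = a" "last ?c = b"
    using f by (simp_all del: upt_Suc add: hd_map last_map)
  ultimately show "\<exists>c. length c = Suc m \<and> hd c = a \<and> last c = b \<and> set (pairs c) \<subseteq> S"
    by (intro exI[of _ ?c]) simp
next
  assume "\<exists>c. length c = Suc m \<and> hd c = a \<and> last c = b \<and> set (pairs c) \<subseteq> S"
  then obtain c where c: "length c = Suc m" "hd c = a" "last c = b" "set (pairs c) \<subseteq> S"
    by blast
  then have "c \<noteq> []" "\<forall>i<m. step c i \<in> S"
    by (force simp: in_set_pairs)+
  then show "(a, b) \<in> S ^^ m"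
    unfolding relpow_fun_conv using c by (intro exI[of _ "(!) c"]) (auto simp: step_def hd_conv_nth last_conv_nth)
qed

lemma pairs_subset_rtrancl:
  assumes "c \<noteq> []" "set (pairs c) \<subseteq> S"
  shows "(hd c, last c) \<in> S\<^sup>*"
proof -
  have "(hd c, last c) \<in> S ^^ (length c - 1)"
    unfolding relpow_iff_pairs using assms by (intro exI[of _ c]) auto
  then show ?thesis by (rule relpow_imp_rtrancl)
qed

lemma last_take_Suc: "i < length xs \<Longrightarrow> last (take (Suc i) xs) = xs ! i"
  by (simp add: take_Suc_conv_app_nth)

lemma successively_concat:
  "\<forall>xs\<in>set xss. xs \<noteq> [] \<and> successively P xs \<Longrightarrow> successively (\<lambda>xs ys. P (last xs) (hd ys)) xss
   \<Longrightarrow> successively P (concat xss)"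
proof (induction xss)
  case (Cons xs xss)
  then show ?case
    by (cases xss) (auto simp: successively_append_iff successively_Cons)
qed simp

definition inner_nodes :: "'a list \<Rightarrow> 'a set" where
  "inner_nodes xs = set (butlast (tl xs))"

lemma in_inner_nodes_iff: "y \<in> inner_nodes xs \<longleftrightarrow> (\<exists>j. 0 < j \<and> j < length xs - 1 \<and> xs ! j = y)"
proof
  assume "y \<in> inner_nodes xs"
  then obtain i where "i < length (butlast (tl xs))" "butlast (tl xs) ! i = y"
    unfolding inner_nodes_def in_set_conv_nth by blast
  then show "\<exists>j. 0 < j \<and> j < length xs - 1 \<and> xs ! j = y"
    by (intro exI[of _ "Suc i"]) (auto simp: nth_butlast nth_tl)
next
  assume "\<exists>j. 0 < j \<and> j < length xs - 1 \<and> xs ! j = y"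
  then obtain j where "0 < j" "j < length xs - 1" "xs ! j = y" by blast
  then show "y \<in> inner_nodes xs"
    unfolding inner_nodes_def in_set_conv_nth
    by (intro exI[of _ "j - 1"]) (auto simp: nth_butlast nth_tl)
qed

lemma inner_nodes_Cons_Cons:
  "xs \<noteq> [] \<Longrightarrow> inner_nodes (a # b # xs) = insert b (inner_nodes (b # xs))"
  by (cases xs rule: rev_cases) (auto simp: inner_nodes_def)

lemma inner_nodes_append_tl:
  assumes "2 \<le> length xs" "2 \<le> length ys" "last xs = hd ys"
  shows "inner_nodes (xs @ tl ys) = inner_nodes xs \<union> {last xs} \<union> inner_nodes ys"
proof -
  obtain x xs' where xs: "xs = x # xs'" "xs' \<noteq> []" using assms(1) by (cases xs; cases "tl xs") auto
  obtain y ys' where ys: "ys = y # ys'" "ys' \<noteq> []" using assms(2) by (cases ys; cases "tl ys") auto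
  have split_xs': "set xs' = set (butlast xs' @ [last xs'])"
    using xs(2) by simp
  have "inner_nodes (xs @ tl ys) = set (xs' @ butlast ys')"
    using xs ys by (simp add: inner_nodes_def butlast_append)
  also have "\<dots> = set (butlast xs') \<union> {last xs'} \<union> set (butlast ys')"
    using split_xs' by auto
  finally show ?thesis using xs ys by (simp add: inner_nodes_def)
qed

section \<open>Shortest chains\<close>

text \<open>\<open>rel_dist S a b\<close> and \<open>geodesic S a b\<close> are junk values unless \<open>(a, b) \<in> S\<^sup>*\<close>.\<close>

definition rel_dist :: "('a \<times> 'a) set \<Rightarrow> 'a \<Rightarrow> 'a \<Rightarrow> nat" where
  "rel_dist S a b = (LEAST m. (a, b) \<in> S ^^ m)"

definition geodesic :: "('a \<times> 'a) set \<Rightarrow> 'a \<Rightarrow> 'a \<Rightarrow> 'a list" where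
  "geodesic S a b =
     (SOME c. length c = Suc (rel_dist S a b) \<and> hd c = a \<and> last c = b \<and> set (pairs c) \<subseteq> S)"

lemma rel_dist_le:
  assumes "c \<noteq> []" "set (pairs c) \<subseteq> S"
  shows "rel_dist S (hd c) (last c) \<le> length c - 1"
  unfolding rel_dist_def using assms by (intro Least_le) (auto simp: relpow_iff_pairs)

lemma geodesic:
  assumes "(a, b) \<in> S\<^sup>*"
  shows "length (geodesic S a b) = Suc (rel_dist S a b)" and "hd (geodesic S a b) = a"
    and "last (geodesic S a b) = b" and "set (pairs (geodesic S a b)) \<subseteq> S"
proof -
  have "\<exists>m. (a, b) \<in> S ^^ m"
    using assms by (simp add: rtrancl_power)
  then have "(a, b) \<in> S ^^ rel_dist S a b"
    unfolding rel_dist_def by (rule LeastI_ex)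
  then have "\<exists>c. length c = Suc (rel_dist S a b) \<and> hd c = a \<and> last c = b \<and> set (pairs c) \<subseteq> S"
    by (simp add: relpow_iff_pairs)
  then show "length (geodesic S a b) = Suc (rel_dist S a b)" "hd (geodesic S a b) = a"
    "last (geodesic S a b) = b" "set (pairs (geodesic S a b)) \<subseteq> S"
    unfolding geodesic_def by (metis (mono_tags, lifting) someI_ex)+
qed

lemma geodesic_shortest:
  assumes "(a, b) \<in> S\<^sup>*" "c \<noteq> []" "set (pairs c) \<subseteq> S" "hd c = a" "last c = b"
  shows "length (geodesic S a b) \<le> length c"
  using rel_dist_le[OF assms(2,3)] geodesic(1)[OF assms(1)] assms(2,4,5) by (cases c) auto

lemma geodesic_nth_neq_hd:
  assumes ab: "(a, b) \<in> S\<^sup>*" and i: "0 < i" "i < length (geodesic S a b)"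
  shows "geodesic S a b ! i \<noteq> a"
proof
  let ?g = "geodesic S a b"
  assume "?g ! i = a"
  then have "length ?g \<le> length (drop i ?g)"
    using ab i geodesic(3,4)[OF ab] set_drop_subset[of i "pairs ?g"]
    by (intro geodesic_shortest) (auto simp: pairs_drop hd_drop_conv_nth)
  then show False using i by simp
qed

lemma geodesic_nth_neq_last:
  assumes ab: "(a, b) \<in> S\<^sup>*" and i: "i < length (geodesic S a b) - 1"
  shows "geodesic S a b ! i \<noteq> b"
proof
  let ?g = "geodesic S a b"
  assume "?g ! i = b"
  then have "length ?g \<le> length (take (Suc i) ?g)"
    using ab i geodesic(2,4)[OF ab] set_take_subset[of i "pairs ?g"]
    by (intro geodesic_shortest) (auto simp: pairs_take last_take_Suc)
  then show False using i by simp
qed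

lemma geodesic_prefix:
  assumes ab: "(a, b) \<in> S\<^sup>*" and i: "i < length (geodesic S a b)"
  shows "(a, geodesic S a b ! i) \<in> S\<^sup>*" and "rel_dist S a (geodesic S a b ! i) \<le> i"
proof -
  let ?c = "take (Suc i) (geodesic S a b)"
  have c: "?c \<noteq> []" "hd ?c = a" "last ?c = geodesic S a b ! i" "set (pairs ?c) \<subseteq> S"
    using i geodesic(2,4)[OF ab] set_take_subset[of i "pairs (geodesic S a b)"]
    by (auto simp: pairs_take last_take_Suc)
  show "(a, geodesic S a b ! i) \<in> S\<^sup>*"
    using pairs_subset_rtrancl[OF c(1,4)] c(2,3) by simp
  show "rel_dist S a (geodesic S a b ! i) \<le> i"
    using rel_dist_le[OF c(1,4)] c(2,3) i by simp
qed

lemma geodesic_suffix: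
  assumes ab: "(a, b) \<in> S\<^sup>*" and i: "i < length (geodesic S a b)"
  shows "(geodesic S a b ! i, b) \<in> S\<^sup>*"
proof -
  let ?c = "drop i (geodesic S a b)"
  have "?c \<noteq> []" "set (pairs ?c) \<subseteq> S"
    using i geodesic(4)[OF ab] set_drop_subset[of i "pairs (geodesic S a b)"]
    by (auto simp: pairs_drop)
  from pairs_subset_rtrancl[OF this] show ?thesis
    using i geodesic(3)[OF ab] by (simp add: hd_drop_conv_nth)
qed

lemma rel_dist_le_through_first_step:
  assumes "trans E" "E \<subseteq> S" and be: "(b, e) \<in> S\<^sup>*" and len: "2 \<le> length (geodesic S b e)"
    and "(p, b) \<in> E" "(b, geodesic S b e ! 1) \<in> E"
  shows "rel_dist S p e \<le> rel_dist S b e"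
proof -
  obtain q rest where g: "geodesic S b e = b # q # rest"
    using len geodesic(2)[OF be] by (cases "geodesic S b e"; cases "tl (geodesic S b e)") auto
  have "(p, q) \<in> S"
    using assms(1,2,5,6) g by (auto dest: transD)
  then have "set (pairs (p # q # rest)) \<subseteq> S"
    using geodesic(4)[OF be] g by auto
  from rel_dist_le[OF _ this] show ?thesis
    using geodesic(1,3)[OF be] g by simp
qed

lemma geodesic_no_shortcut:
  assumes ab: "(a, b) \<in> S\<^sup>*" and k: "Suc (Suc k) < length (geodesic S a b)"
  shows "(geodesic S a b ! k, geodesic S a b ! Suc (Suc k)) \<notin> S"
proof
  let ?g = "geodesic S a b"
  let ?c = "take (Suc k) ?g @ drop (Suc (Suc k)) ?g"
  assume shortcut: "(?g ! k, ?g ! Suc (Suc k)) \<in> S"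
  have "pairs ?c = pairs (take (Suc k) ?g) @
      (last (take (Suc k) ?g), hd (drop (Suc (Suc k)) ?g)) # pairs (drop (Suc (Suc k)) ?g)"
    using k by (intro pairs_append) auto
  also have "\<dots> = take k (pairs ?g) @ (?g ! k, ?g ! Suc (Suc k)) # drop (Suc (Suc k)) (pairs ?g)"
    using k by (simp add: pairs_take pairs_drop last_take_Suc hd_drop_conv_nth)
  finally have "set (pairs ?c) \<subseteq> S"
    using shortcut geodesic(4)[OF ab] set_take_subset[of k "pairs ?g"]
      set_drop_subset[of "Suc (Suc k)" "pairs ?g"] by auto
  moreover have "hd ?c = a \<and> last ?c = b"
    using k geodesic(2,3)[OF ab] by (cases ?g) auto
  ultimately have "length ?g \<le> length ?c"
    using ab k by (intro geodesic_shortest) auto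
  then show False using k by simp
qed

section \<open>Geodesics for a union of two equivalence relations\<close>

definition separated :: "('a \<times> 'a) set set \<Rightarrow> 'a \<times> 'a \<Rightarrow> 'a \<times> 'a \<Rightarrow> bool" where
  "separated Es q r \<longleftrightarrow> (\<forall>E\<in>Es. q \<notin> E \<or> r \<notin> E)"

lemma rtrancl_equiv: "equiv UNIV E \<Longrightarrow> E\<^sup>* = E"
  using trancl_id[of E] rtrancl_trancl_reflcl[of E] by (auto simp: equiv_def refl_on_def)

lemma separated_disjoint:
  assumes "set ps \<subseteq> E \<union> F" "2 \<le> length ps" "successively (separated {E, F}) ps"
  shows "set ps \<inter> E \<inter> F = {}"
proof -
  have "ps ! i \<notin> E \<inter> F" if i: "i < length ps" for i
  proof -
    obtain j where j: "j < length ps" "separated {E, F} (ps ! i) (ps ! j) \<or> separated {E, F} (ps ! j) (ps ! i)"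
    proof (cases "Suc i < length ps")
      case True
      then show thesis using assms(3) by (intro that[of "Suc i"]) (auto simp: successively_nth)
    next
      case False
      then have "Suc (i - 1) < length ps" "Suc (i - 1) = i" using i assms(2) by auto
      then show thesis using assms(3) successively_nth[OF assms(3), of "i - 1"]
        by (intro that[of "i - 1"]) auto
    qed
    moreover have "ps ! j \<in> E \<union> F"
      using assms(1) j(1) by (meson nth_mem subsetD)
    ultimately show ?thesis by (auto simp: separated_def)
  qed
  then show ?thesis by (fastforce simp: in_set_conv_nth)
qed

lemma geodesic_union_equiv:
  assumes E: "equiv UNIV E" and F: "equiv UNIV F"
    and ab: "(a, b) \<in> (E \<union> F)\<^sup>*" "(a, b) \<notin> E"
  defines "g \<equiv> geodesic (E \<union> F) a b"
  shows "2 \<le> length g" and "successively (separated {E, F}) (pairs g)"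
    and "set (pairs g) \<inter> E \<inter> F = {}" and "\<exists>q\<in>set (pairs g). q \<notin> E"
proof -
  note g = geodesic[OF ab(1), folded g_def]
  have "a \<noteq> b" using ab(2) E by (auto simp: equiv_def refl_on_def)
  moreover have "hd g = last g" if "length g = 1"
    using that by (cases g) auto
  ultimately show len: "2 \<le> length g"
    using g(1-3) by fastforce
  show sep: "successively (separated {E, F}) (pairs g)"
    unfolding successively_conv_nth
  proof (intro allI impI)
    fix k assume k: "Suc k < length (pairs g)"
    have "(g ! k, g ! Suc (Suc k)) \<notin> E \<union> F"
      using geodesic_no_shortcut[OF ab(1)] k by (simp add: g_def)
    then show "separated {E, F} (pairs g ! k) (pairs g ! Suc k)"
      using k E F by (auto simp: separated_def nth_pairs step_def equiv_def dest: transD)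
  qed
  show "set (pairs g) \<inter> E \<inter> F = {}"
  proof (cases "length g = 2")
    case True
    then obtain x y where "g = [x, y]"
      by (auto simp: length_Suc_conv numeral_2_eq_2)
    then have "pairs g = [(a, b)]"
      using g(2,3) by simp
    then show ?thesis using ab(2) by simp
  next
    case False
    then show ?thesis using separated_disjoint[OF g(4) _ sep] len by simp
  qed
  show "\<exists>q\<in>set (pairs g). q \<notin> E"
  proof (rule ccontr)
    assume "\<not> (\<exists>q\<in>set (pairs g). q \<notin> E)"
    then have "(hd g, last g) \<in> E\<^sup>*" using len by (intro pairs_subset_rtrancl) auto
    then show False using ab(2) g(2,3) rtrancl_equiv[OF E] by simp
  qed
qed

lemma tri_types_pairs: "tri_types E1 E2 E3 xs = {t. \<exists>q\<in>set (pairs xs). q \<in> tri_piece E1 E2 E3 t}"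
  unfolding tri_types_def Bex_def in_set_pairs by blast

lemma reduced_loop_length:
  assumes "reduced S1 S2 T xs" "hd xs = last xs"
  shows "2 < length xs"
proof (rule ccontr)
  assume "\<not> 2 < length xs"
  then have "length xs = 2" using assms(1) by (simp add: reduced_def)
  then obtain a b where "xs = [a, b]"
    by (auto simp: length_Suc_conv numeral_2_eq_2)
  then show False
    using assms by (simp add: reduced_def)
qed

lemma concat_Ri_loops_single:
  assumes loops: "concat_Ri_loops E1 E2 E3 xs" and simple: "hd xs \<notin> inner_nodes xs"
  shows "\<exists>i\<in>{1, 2, 3}. set (pairs xs) \<subseteq> tri_Ri E1 E2 E3 i"
proof -
  obtain js where js: "2 \<le> length js" "hd js = 0" "last js = length xs - 1" "sorted_wrt (<) js"
    "\<forall>t < length js - 1. xs ! (js ! t) = xs ! (js ! Suc t) \<and>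
       (\<exists>i\<in>{1,2,3::nat}. \<forall>k. js ! t \<le> k \<and> k < js ! Suc t \<longrightarrow> step xs k \<in> tri_Ri E1 E2 E3 i)"
    using loops unfolding concat_Ri_loops_def by blast
  have j0: "js ! 0 = 0" using js(1,2) by (cases js) auto
  have j1: "0 < js ! 1" using sorted_wrt_nth_less[OF js(4), of 0 1] js(1) j0 by simp
  have "js ! 1 \<le> js ! (length js - 1)"
    using sorted_nth_mono[OF strict_sorted_imp_sorted[OF js(4)], of 1 "length js - 1"] js(1) by simp
  moreover have "js \<noteq> []" using js(1) by auto
  then have "js ! (length js - 1) = length xs - 1" using js(3) by (simp add: last_conv_nth)
  ultimately have j1_le: "js ! 1 \<le> length xs - 1" by simp
  have "xs ! (js ! 0) = xs ! (js ! 1) \<and>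
      (\<exists>i\<in>{1,2,3::nat}. \<forall>k. js ! 0 \<le> k \<and> k < js ! 1 \<longrightarrow> step xs k \<in> tri_Ri E1 E2 E3 i)"
    using js(5) js(1) by simp
  then obtain i where i: "i \<in> {1, 2, 3}" "xs ! (js ! 1) = xs ! 0"
    "\<forall>k < js ! 1. step xs k \<in> tri_Ri E1 E2 E3 i"
    using j0 by auto
  have "xs \<noteq> []" using j1 j1_le by auto
  have "js ! 1 = length xs - 1"
  proof (rule ccontr)
    assume "js ! 1 \<noteq> length xs - 1"
    then have "xs ! (js ! 1) \<in> inner_nodes xs"
      using j1 j1_le by (auto simp: in_inner_nodes_iff)
    then show False
      using simple i(2) \<open>xs \<noteq> []\<close> by (simp add: hd_conv_nth)
  qed
  then show ?thesis using i by (auto simp: in_set_pairs)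
qed

section \<open>Three equivalence relations with the triangle intersection property\<close>

locale equiv_triangle =
  fixes R12 R13 R23 :: "('a \<times> 'a) set"
  assumes equiv_R12: "equiv UNIV R12" and equiv_R13: "equiv UNIV R13"
    and equiv_R23: "equiv UNIV R23"
    and R1_inter_R2: "(R12 \<union> R13)\<^sup>* \<inter> (R12 \<union> R23)\<^sup>* = R12"
    and R1_inter_R3: "(R12 \<union> R13)\<^sup>* \<inter> (R13 \<union> R23)\<^sup>* = R13"
    and R2_inter_R3: "(R12 \<union> R23)\<^sup>* \<inter> (R13 \<union> R23)\<^sup>* = R23"
begin

abbreviation "R0 \<equiv> R12 \<inter> R13 \<inter> R23"
abbreviation "R1 \<equiv> (R12 \<union> R13)\<^sup>*"
abbreviation "R2 \<equiv> (R12 \<union> R23)\<^sup>*"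
abbreviation "R3 \<equiv> (R13 \<union> R23)\<^sup>*"

definition leg :: "bool \<Rightarrow> ('a \<times> 'a) set" where
  "leg l = (if l then R13 else R23)"

abbreviation side :: "bool \<Rightarrow> ('a \<times> 'a) set" where
  "side l \<equiv> (R12 \<union> leg l)\<^sup>*"

lemma side_True: "side True = R1" and side_False: "side False = R2"
  by (simp_all add: leg_def)

lemma equiv_leg: "equiv UNIV (leg l)"
  using equiv_R13 equiv_R23 by (simp add: leg_def)

lemma sym_side: "sym (side l)"
  using equiv_R12 equiv_leg[of l] by (intro sym_rtrancl sym_Un) (auto simp: equiv_def)

lemma R12_inter_R13: "R12 \<inter> R13 \<subseteq> R23"
proof -
  have "R12 \<inter> R13 \<subseteq> R2 \<inter> R3" by auto
  then show ?thesis using R2_inter_R3 by simp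
qed

lemma R12_inter_R23: "R12 \<inter> R23 \<subseteq> R13"
proof -
  have "R12 \<inter> R23 \<subseteq> R1 \<inter> R3" by auto
  then show ?thesis using R1_inter_R3 by simp
qed

lemma R13_inter_R23: "R13 \<inter> R23 \<subseteq> R12"
proof -
  have "R13 \<inter> R23 \<subseteq> R1 \<inter> R2" by auto
  then show ?thesis using R1_inter_R2 by simp
qed

lemma R12_inter_leg: "R12 \<inter> leg l \<subseteq> R0"
  using R12_inter_R13 R12_inter_R23 by (auto simp: leg_def)

lemma leg_inter_opposite_side: "leg l \<inter> side (\<not> l) \<subseteq> R0"
proof -
  have "leg l \<subseteq> side l" by auto
  then have "leg l \<inter> side (\<not> l) \<subseteq> R12"
    using R1_inter_R2 by (cases l) (auto simp: leg_def)
  then show ?thesis using R12_inter_leg[of l] by blast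
qed

lemma R12_inter_R3: "R12 \<inter> R3 \<subseteq> R0"
proof -
  have "R12 \<subseteq> R1" by auto
  then have "R12 \<inter> R3 \<subseteq> R13" using R1_inter_R3 by blast
  then show ?thesis using R12_inter_R13 by blast
qed

lemma not_in_opposite_leg: "q \<in> R12 \<union> leg l \<Longrightarrow> q \<notin> R0 \<Longrightarrow> q \<notin> leg (\<not> l)"
  using R12_inter_leg[of "\<not> l"] R13_inter_R23 by (cases l) (auto simp: leg_def)

section \<open>Alternating loops and their expansion into geodesics\<close>

definition label :: "'a \<times> 'a \<Rightarrow> bool" where
  "label q \<longleftrightarrow> q \<in> R1"

definition good :: "'a \<times> 'a \<Rightarrow> bool" where
  "good q \<longleftrightarrow> q \<notin> R12 \<and> q \<in> R1 \<union> R2"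

lemma goodI: "q \<in> side l \<Longrightarrow> q \<notin> R12 \<Longrightarrow> good q"
  by (cases l) (auto simp: good_def leg_def)

lemma good_in_side: "good q \<Longrightarrow> q \<in> side (label q)"
  by (auto simp: good_def label_def leg_def)

lemma label_eqI: "q \<in> side l \<Longrightarrow> q \<notin> R12 \<Longrightarrow> label q = l"
  using R1_inter_R2 by (cases l) (auto simp: label_def leg_def)

definition link :: "'a \<times> 'a \<Rightarrow> 'a list" where
  "link q = geodesic (R12 \<union> leg (label q)) (fst q) (snd q)"

definition link_length :: "'a \<times> 'a \<Rightarrow> nat" where
  "link_length q = rel_dist (R12 \<union> leg (label q)) (fst q) (snd q)"

lemma link:
  assumes "good q"
  shows "length (link q) = Suc (link_length q)" and "2 \<le> length (link q)"
    and "hd (link q) = fst q" and "last (link q) = snd q"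
    and "set (pairs (link q)) \<subseteq> R12 \<union> leg (label q) - R0"
    and "successively (separated {R12, R13, R23}) (pairs (link q))"
    and "\<exists>r\<in>set (pairs (link q)). r \<in> leg (label q)"
proof -
  let ?l = "label q"
  have q: "(fst q, snd q) \<in> (R12 \<union> leg ?l)\<^sup>*" "(fst q, snd q) \<notin> R12"
    using assms good_in_side[OF assms] by (auto simp: good_def)
  note g = geodesic[OF q(1), folded link_def link_length_def]
  note u = geodesic_union_equiv[OF equiv_R12 equiv_leg q, folded link_def]
  show "length (link q) = Suc (link_length q)" "2 \<le> length (link q)"
    "hd (link q) = fst q" "last (link q) = snd q"
    using g u by simp_all
  show steps: "set (pairs (link q)) \<subseteq> R12 \<union> leg ?l - R0"
  proof -
    have "R0 \<subseteq> R12 \<inter> leg ?l" by (auto simp: leg_def)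
    then show ?thesis using g(4) u(3) by blast
  qed
  have "{R13, R23} = {leg ?l, leg (\<not> ?l)}"
    by (auto simp: leg_def)
  then show "successively (separated {R12, R13, R23}) (pairs (link q))"
    using u(2) steps not_in_opposite_leg
    by (elim successively_mono) (auto simp: separated_def)
  show "\<exists>r\<in>set (pairs (link q)). r \<in> leg ?l"
    using u(4) g(4) by blast
qed

fun expand :: "'a list \<Rightarrow> 'a list" where
  "expand [] = []"
| "expand [a] = [a]"
| "expand (a # b # rs) = link (a, b) @ tl (expand (b # rs))"

lemma expand:
  "W \<noteq> [] \<Longrightarrow> \<forall>q\<in>set (pairs W). good q \<Longrightarrow>
    expand W \<noteq> [] \<and> hd (expand W) = hd W \<and> last (expand W) = last W \<and> length W \<le> length (expand W)"
proof (induction W rule: expand.induct)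
  case (3 a b rs)
  have g: "good (a, b)" using "3.prems" by simp
  have IH: "expand (b # rs) \<noteq> [] \<and> hd (expand (b # rs)) = b \<and>
      last (expand (b # rs)) = last (b # rs) \<and> length (b # rs) \<le> length (expand (b # rs))"
    using "3.IH" "3.prems" by simp
  then obtain e es where e: "expand (b # rs) = b # es" "length rs \<le> length es"
    by (cases "expand (b # rs)") auto
  show ?case
    using link(2-4)[OF g] IH e by (cases es) (auto simp: hd_append)
qed auto

lemma pairs_expand:
  "W \<noteq> [] \<Longrightarrow> \<forall>q\<in>set (pairs W). good q \<Longrightarrow>
    pairs (expand W) = concat (map (pairs \<circ> link) (pairs W))"
proof (induction W rule: expand.induct)
  case (3 a b rs)
  have g: "good (a, b)" using "3.prems" by simp
  have "pairs (expand (a # b # rs)) = pairs (link (a, b)) @ pairs (expand (b # rs))"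
    using link(2-4)[OF g] expand[of "b # rs"] "3.prems" by (auto intro!: pairs_append_tl)
  then show ?case using "3.IH" "3.prems" by simp
qed auto

lemma inner_nodes_expand:
  "W \<noteq> [] \<Longrightarrow> \<forall>q\<in>set (pairs W). good q \<Longrightarrow>
    inner_nodes (expand W) = inner_nodes W \<union> (\<Union>q\<in>set (pairs W). inner_nodes (link q))"
proof (induction W rule: expand.induct)
  case (3 a b rs)
  have g: "good (a, b)" using "3.prems" by simp
  show ?case
  proof (cases "rs = []")
    case True
    then show ?thesis by (simp add: inner_nodes_def)
  next
    case False
    have len: "2 \<le> length (expand (b # rs))"
      using expand[of "b # rs"] "3.prems" False by (cases rs) auto
    have joint: "last (link (a, b)) = hd (expand (b # rs))"
      using link(4)[OF g] expand[of "b # rs"] "3.prems" by simp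
    have "inner_nodes (expand (a # b # rs)) =
        inner_nodes (link (a, b)) \<union> {b} \<union> inner_nodes (expand (b # rs))"
      using inner_nodes_append_tl[OF link(2)[OF g] len joint] link(4)[OF g] by simp
    then show ?thesis
      using "3.IH" "3.prems" False by (auto simp: inner_nodes_Cons_Cons)
  qed
qed auto

definition alt_loop :: "'a \<Rightarrow> 'a list \<Rightarrow> bool" where
  "alt_loop x W \<longleftrightarrow> 3 \<le> length W \<and> hd W = x \<and> last W = x \<and>
     (\<forall>k < length W - 1. good (step W k)) \<and>
     (\<forall>k. Suc k < length W - 1 \<longrightarrow> label (step W k) \<noteq> label (step W (Suc k)))"

lemma alt_loopD:
  assumes "alt_loop x W"
  shows "W \<noteq> []" and "W ! 0 = x" and "W ! (length W - 1) = x" and "3 \<le> length W"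
    and "\<And>k. k < length W - 1 \<Longrightarrow> good (step W k)"
    and "\<And>k. Suc k < length W - 1 \<Longrightarrow> label (step W k) \<noteq> label (step W (Suc k))"
proof -
  show ne: "W \<noteq> []" using assms by (auto simp: alt_loop_def)
  show "W ! 0 = x" using assms ne by (simp add: alt_loop_def hd_conv_nth[symmetric])
  show "W ! (length W - 1) = x" using assms ne by (metis alt_loop_def last_conv_nth)
qed (use assms in \<open>auto simp: alt_loop_def\<close>)

lemma alt_loop_take:
  assumes W: "alt_loop x W" and j: "2 \<le> j" "j < length W" "W ! j = x"
  shows "alt_loop x (take (Suc j) W)"
proof -
  let ?W = "take (Suc j) W"
  have steps: "step ?W k = step W k" if "k < j" for k
    using that j by (simp add: step_def)
  show ?thesis
    unfolding alt_loop_def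
  proof (intro conjI allI impI)
    show "3 \<le> length ?W" using j by simp
    show "hd ?W = x" using W by (simp add: alt_loop_def)
    show "last ?W = x" using j by (simp add: last_take_Suc)
    show "good (step ?W k)" if "k < length ?W - 1" for k
      using that j steps[of k] alt_loopD(5)[OF W, of k] by simp
    show "label (step ?W k) \<noteq> label (step ?W (Suc k))" if "Suc k < length ?W - 1" for k
      using that j steps[of k] steps[of "Suc k"] alt_loopD(6)[OF W, of k] by simp
  qed
qed

lemma alt_loop_restart:
  assumes W: "alt_loop x W" and k: "Suc k < length W - 1"
    and new: "good (x, W ! Suc k)" "label (x, W ! Suc k) = label (step W k)"
  shows "alt_loop x (x # drop (Suc k) W)"
proof -
  let ?W = "x # drop (Suc k) W"
  have len: "length ?W = length W - k" using k by simp
  have step0: "step ?W 0 = (x, W ! Suc k)" using k by (simp add: step_def)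
  have steps: "step ?W (Suc m) = step W (Suc k + m)" if "Suc m < length ?W - 1" for m
    using that k by (simp add: step_def)
  show ?thesis
    unfolding alt_loop_def
  proof (intro conjI allI impI)
    show "3 \<le> length ?W" using len k by simp
    show "hd ?W = x" by simp
    show "last ?W = x" using k W by (simp add: alt_loop_def)
    show "good (step ?W m)" if "m < length ?W - 1" for m
      using that new(1) step0 steps[of "m - 1"] alt_loopD(5)[OF W, of "Suc k + (m - 1)"] len
      by (cases m) auto
    show "label (step ?W m) \<noteq> label (step ?W (Suc m))" if "Suc m < length ?W - 1" for m
      using that new(2) step0 steps[of m] steps[of "m - 1"] len k
        alt_loopD(6)[OF W, of "Suc k + (m - 1)"] alt_loopD(6)[OF W, of k]
      by (cases m) auto
  qed
qed

lemma alt_loop_truncate: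
  assumes W: "alt_loop x W" and k: "0 < k" "k < length W - 1"
    and new: "good (W ! k, x)" "label (W ! k, x) = label (step W k)"
  shows "alt_loop x (take (Suc k) W @ [x])"
proof -
  let ?W = "take (Suc k) W @ [x]"
  have len: "length ?W = Suc (Suc k)" using k by simp
  have steps: "step ?W m = (if m = k then (W ! k, x) else step W m)" if "m \<le> k" for m
    using that k by (auto simp: step_def nth_append)
  show ?thesis
    unfolding alt_loop_def
  proof (intro conjI allI impI)
    show "3 \<le> length ?W" using len k by simp
    show "hd ?W = x" using W alt_loopD(1)[OF W] by (simp add: alt_loop_def)
    show "last ?W = x" by simp
    show "good (step ?W m)" if "m < length ?W - 1" for m
      using that len new(1) steps[of m] alt_loopD(5)[OF W, of m] k by auto
    show "label (step ?W m) \<noteq> label (step ?W (Suc m))" if "Suc m < length ?W - 1" for m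
      using that len new(2) steps[of m] steps[of "Suc m"] alt_loopD(6)[OF W, of m] k by auto
  qed
qed

lemma alt_loop_update:
  assumes W: "alt_loop x W" and k: "Suc k < length W - 1"
    and new: "good (W ! k, p)" "label (W ! k, p) = label (step W k)"
      "good (p, W ! Suc (Suc k))" "label (p, W ! Suc (Suc k)) = label (step W (Suc k))"
  shows "alt_loop x (W[Suc k := p])"
proof -
  let ?W = "W[Suc k := p]"
  note steps = step_list_update[OF k]
  have good_label: "good (step ?W m) \<and> label (step ?W m) = label (step W m)"
    if "m < length W - 1" for m
    using steps[OF that] new alt_loopD(5)[OF W that] by auto
  show ?thesis
    unfolding alt_loop_def length_list_update
  proof (intro conjI allI impI)
    show "3 \<le> length W" by (rule alt_loopD(4)[OF W])
    show "hd ?W = x" using W k by (cases W) (auto simp: alt_loop_def)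
    show "last ?W = x" using alt_loopD(1,3)[OF W] k by (simp add: last_conv_nth)
    show "good (step ?W m)" if "m < length W - 1" for m
      using good_label[OF that] by simp
    show "label (step ?W m) \<noteq> label (step ?W (Suc m))" if "Suc m < length W - 1" for m
      using good_label[of m] good_label[of "Suc m"] alt_loopD(6)[OF W that] that by auto
  qed
qed

definition cost :: "'a list \<Rightarrow> nat" where
  "cost W = (\<Sum>k < length W - 1. link_length (step W k))"

lemma cost_update_less:
  assumes k: "Suc k < length W - 1"
    and less: "link_length (W ! k, p) < link_length (step W k)"
    and le: "link_length (p, W ! Suc (Suc k)) \<le> link_length (step W (Suc k))"
  shows "cost (W[Suc k := p]) < cost W"
  unfolding cost_def length_list_update
proof (rule sum_strict_mono_ex1)
  note steps = step_list_update[OF k]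
  show "finite {..<length W - 1}" by simp
  show "\<forall>m\<in>{..<length W - 1}. link_length (step (W[Suc k := p]) m) \<le> link_length (step W m)"
    using steps less le by auto
  show "\<exists>m\<in>{..<length W - 1}. link_length (step (W[Suc k := p]) m) < link_length (step W m)"
    using steps[of k] k less by (intro bexI[of _ k]) auto
qed

text \<open>Minimal length keeps \<open>x\<close> off the interior of the expansion; minimal cost among the
  shortest loops rules out two consecutive \<open>R12\<close>-steps where two geodesics meet.\<close>

definition minimal_alt_loop :: "'a \<Rightarrow> 'a list \<Rightarrow> bool" where
  "minimal_alt_loop x W \<longleftrightarrow> alt_loop x W \<and>
     (\<forall>W'. alt_loop x W' \<longrightarrow> length W \<le> length W' \<and> (length W' = length W \<longrightarrow> cost W \<le> cost W'))"

lemma minimal_alt_loop_exists: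
  assumes "alt_loop x W0"
  shows "\<exists>W. minimal_alt_loop x W"
proof -
  obtain W1 where W1: "alt_loop x W1" "\<forall>W'. alt_loop x W' \<longrightarrow> length W1 \<le> length W'"
    using ex_has_least_nat[of "alt_loop x" W0 length] assms by blast
  obtain W where "alt_loop x W \<and> length W = length W1"
    "\<forall>W'. alt_loop x W' \<and> length W' = length W1 \<longrightarrow> cost W \<le> cost W'"
    using ex_has_least_nat[of "\<lambda>W. alt_loop x W \<and> length W = length W1" W1 cost] W1(1) by blast
  then show ?thesis
    using W1 by (auto simp: minimal_alt_loop_def)
qed

lemma minimal_alt_loop_inner_nodes:
  assumes min: "minimal_alt_loop x W"
  shows "x \<notin> inner_nodes W"
proof
  assume "x \<in> inner_nodes W"
  then obtain j where j: "0 < j" "j < length W - 1" "W ! j = x"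
    by (auto simp: in_inner_nodes_iff)
  have W: "alt_loop x W" using min by (simp add: minimal_alt_loop_def)
  have "j \<noteq> 1"
  proof
    assume "j = 1"
    then have "step W 0 = (x, x)" using alt_loopD(2)[OF W] j by (simp add: step_def)
    moreover have "good (step W 0)" using alt_loopD(5)[OF W, of 0] j by simp
    ultimately show False
      using equiv_R12 by (auto simp: good_def equiv_def refl_on_def)
  qed
  then have "alt_loop x (take (Suc j) W)"
    using alt_loop_take[OF W] j by simp
  then have "length W \<le> Suc j"
    using min j by (fastforce simp: minimal_alt_loop_def)
  then show False using j by simp
qed

lemma minimal_alt_loop_inner_step:
  assumes min: "minimal_alt_loop x W" and k: "0 < k" "Suc k < length W - 1"
  shows "(x, W ! Suc k) \<notin> side (label (step W k))"
proof
  define l where "l = label (step W k)"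
  assume xb: "(x, W ! Suc k) \<in> side l"
  have W: "alt_loop x W" using min by (simp add: minimal_alt_loop_def)
  have good: "good (W ! k, W ! Suc k)"
    using alt_loopD(5)[OF W, of k] k by (simp add: step_def)
  show False
  proof (cases "(x, W ! Suc k) \<in> R12")
    case False
    then have "alt_loop x (x # drop (Suc k) W)"
      using alt_loop_restart[OF W k(2)] label_eqI[OF xb] goodI[OF xb] by (simp add: l_def)
    then show False
      using min k by (fastforce simp: minimal_alt_loop_def)
  next
    case True
    have "(W ! k, W ! Suc k) \<in> side l"
      using good_in_side[OF good] by (simp add: l_def step_def)
    then have ax: "(W ! k, x) \<in> side l"
      using xb sym_side by (auto intro: rtrancl_trans dest: symD)
    have "(W ! k, x) \<notin> R12"
      using True good equiv_R12 by (auto simp: good_def equiv_def dest: transD)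
    then have "alt_loop x (take (Suc k) W @ [x])"
      using alt_loop_truncate[OF W k(1)] k(2) label_eqI[OF ax] goodI[OF ax] by (simp add: l_def)
    then show False
      using min k by (fastforce simp: minimal_alt_loop_def)
  qed
qed

lemma minimal_alt_loop_link_inner_nodes:
  assumes min: "minimal_alt_loop x W" and k: "k < length W - 1"
  shows "x \<notin> inner_nodes (link (step W k))"
proof
  assume "x \<in> inner_nodes (link (step W k))"
  then obtain i where i: "0 < i" "i < length (link (step W k)) - 1" "link (step W k) ! i = x"
    by (auto simp: in_inner_nodes_iff)
  have W: "alt_loop x W" using min by (simp add: minimal_alt_loop_def)
  have good: "good (W ! k, W ! Suc k)"
    using alt_loopD(5)[OF W k] by (simp add: step_def)
  define l where "l = label (step W k)"
  have ab: "(W ! k, W ! Suc k) \<in> side l"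
    using good_in_side[OF good] by (simp add: l_def step_def)
  have g: "link (step W k) = geodesic (R12 \<union> leg l) (W ! k) (W ! Suc k)"
    by (simp add: link_def l_def step_def)
  consider "k = 0" | "Suc k = length W - 1" | "0 < k" "Suc k < length W - 1"
    using k by linarith
  then show False
  proof cases
    case 1
    then show False
      using geodesic_nth_neq_hd[OF ab i(1)] i alt_loopD(2)[OF W] g by auto
  next
    case 2
    then show False
      using geodesic_nth_neq_last[OF ab] i alt_loopD(3)[OF W] g by auto
  next
    case 3
    then show False
      using minimal_alt_loop_inner_step[OF min 3] geodesic_suffix[OF ab] i g by (auto simp: l_def)
  qed
qed

text \<open>Moving the vertex \<open>W ! Suc k\<close> back to the previous vertex \<open>p\<close> of the first geodesic
  shortens that geodesic, and the second one does not get longer.\<close>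

lemma alt_loop_reroute_junction:
  assumes W: "alt_loop x W" and k: "Suc k < length W - 1"
    and junction: "last (pairs (link (step W k))) \<in> R12" "hd (pairs (link (step W (Suc k)))) \<in> R12"
  defines "p \<equiv> fst (last (pairs (link (step W k))))"
  shows "alt_loop x (W[Suc k := p])" and "cost (W[Suc k := p]) < cost W"
proof -
  define a b e where "a = W ! k" and "b = W ! Suc k" and "e = W ! Suc (Suc k)"
  have steps: "step W k = (a, b)" "step W (Suc k) = (b, e)"
    by (simp_all add: step_def a_def b_def e_def)
  have good: "good (a, b)" "good (b, e)"
    using alt_loopD(5)[OF W, of k] alt_loopD(5)[OF W, of "Suc k"] k steps by auto
  define l1 l2 where "l1 = label (a, b)" and "l2 = label (b, e)"
  have ab: "(a, b) \<in> side l1" and be: "(b, e) \<in> side l2"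
    using good_in_side[OF good(1)] good_in_side[OF good(2)] by (simp_all add: l1_def l2_def)
  define g1 g2 where "g1 = geodesic (R12 \<union> leg l1) a b" and "g2 = geodesic (R12 \<union> leg l2) b e"
  have links: "link (a, b) = g1" "link (b, e) = g2"
    by (simp_all add: g1_def g2_def link_def l1_def l2_def)
  note link1 = link[OF good(1), unfolded links] and link2 = link[OF good(2), unfolded links]
  have p: "p = g1 ! (length g1 - 2)" and pb: "(p, b) \<in> R12"
    using junction(1) last_pairs[OF link1(2)] link1(4) by (simp_all add: p_def steps links)
  have bq: "(b, g2 ! 1) \<in> R12"
    using junction(2) hd_pairs[OF link2(2)] link2(3) by (simp add: steps links)
  have "length g1 - 2 < length g1" using link1(2) by simp
  note prefix = geodesic_prefix[OF ab this[unfolded g1_def], folded g1_def p]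
  have pe: "(p, e) \<in> side l2"
    using pb be by (auto intro: rtrancl_trans)
  have "(a, p) \<notin> R12" "(p, e) \<notin> R12"
    using pb good equiv_R12 by (auto simp: good_def equiv_def dest: transD symD)
  then have new: "good (a, p)" "label (a, p) = l1" "good (p, e)" "label (p, e) = l2"
    using prefix(1) pe by (simp_all add: goodI label_eqI)
  show "alt_loop x (W[Suc k := p])"
    using alt_loop_update[OF W k] new steps by (simp add: l1_def l2_def a_def e_def)
  have "rel_dist (R12 \<union> leg l1) a p < link_length (a, b)"
    using prefix(2) link1(1,2) by simp
  moreover have "rel_dist (R12 \<union> leg l2) p e \<le> link_length (b, e)"
    using rel_dist_le_through_first_step[OF _ _ be link2(2)[unfolded g2_def] pb bq[unfolded g2_def]]
      equiv_R12 by (auto simp: equiv_def link_length_def l2_def)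
  ultimately show "cost (W[Suc k := p]) < cost W"
    using cost_update_less[OF k] new steps by (simp add: link_length_def a_def e_def)
qed

lemma minimal_alt_loop_junction:
  assumes min: "minimal_alt_loop x W" and k: "Suc k < length W - 1"
  shows "last (pairs (link (step W k))) \<notin> R12 \<or> hd (pairs (link (step W (Suc k)))) \<notin> R12"
proof (rule ccontr)
  assume "\<not> ?thesis"
  then show False
    using alt_loop_reroute_junction[OF _ k] min by (fastforce simp: minimal_alt_loop_def)
qed

lemma minimal_alt_loop_junction_separated:
  assumes min: "minimal_alt_loop x W" and i: "Suc i < length W - 1"
  shows "separated {R12, R13, R23} (last (pairs (link (step W i)))) (hd (pairs (link (step W (Suc i)))))"
proof -
  have W: "alt_loop x W" using min by (simp add: minimal_alt_loop_def)
  let ?q1 = "step W i" and ?q2 = "step W (Suc i)"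
  let ?r = "last (pairs (link ?q1))" and ?s = "hd (pairs (link ?q2))"
  have g: "good ?q1" "good ?q2" using alt_loopD(5)[OF W] i by auto
  have "pairs (link ?q1) \<noteq> []" "pairs (link ?q2) \<noteq> []"
    using link(2)[OF g(1)] link(2)[OF g(2)] by (simp_all add: pairs_eq_Nil_iff)
  then have "?r \<in> set (pairs (link ?q1))" "?s \<in> set (pairs (link ?q2))"
    by (simp_all add: last_in_set hd_in_set)
  then have "?r \<in> R12 \<union> leg (label ?q1) - R0" "?s \<in> R12 \<union> leg (label ?q2) - R0"
    using link(5)[OF g(1)] link(5)[OF g(2)] by blast+
  moreover have "label ?q2 = (\<not> label ?q1)"
    using alt_loopD(6)[OF W i] by simp
  ultimately have "?r \<notin> leg (\<not> label ?q1)" "?s \<notin> leg (label ?q1)"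
    using not_in_opposite_leg[of ?r "label ?q1"] not_in_opposite_leg[of ?s "label ?q2"] by auto
  moreover have "?r \<notin> R12 \<or> ?s \<notin> R12"
    using minimal_alt_loop_junction[OF min i] .
  moreover have "{R13, R23} = {leg (label ?q1), leg (\<not> label ?q1)}"
    by (auto simp: leg_def)
  ultimately show ?thesis
    by (auto simp: separated_def)
qed

lemma expand_leg_step:
  assumes W: "alt_loop x W"
  shows "\<exists>q\<in>set (pairs (expand W)). q \<in> leg l"
proof -
  have "label (step W 0) \<noteq> label (step W 1)"
    using alt_loopD(6)[OF W, of 0] alt_loopD(4)[OF W] by simp
  then have "\<exists>j\<in>{0, 1}. label (step W j) = l"
    by (cases l; cases "label (step W 0)") auto
  then obtain j where "j \<in> {0, 1}" "label (step W j) = l" ..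
  then have j: "j < length W - 1" "label (step W j) = l"
    using alt_loopD(4)[OF W] by auto
  have good: "\<forall>q\<in>set (pairs W). good q"
    using alt_loopD(5)[OF W] by (auto simp: in_set_pairs)
  show ?thesis
    using link(7)[OF alt_loopD(5)[OF W j(1)]] j step_in_set_pairs[OF j(1)]
    by (auto simp: pairs_expand[OF alt_loopD(1)[OF W] good])
qed

definition separated_loop :: "'a \<Rightarrow> 'a list \<Rightarrow> bool" where
  "separated_loop x V \<longleftrightarrow> 3 \<le> length V \<and> hd V = x \<and> last V = x \<and> x \<notin> inner_nodes V \<and>
     set (pairs V) \<subseteq> R12 \<union> R13 \<union> R23 - R0 \<and>
     successively (separated {R12, R13, R23}) (pairs V) \<and>
     (\<exists>q\<in>set (pairs V). q \<in> R13) \<and> (\<exists>q\<in>set (pairs V). q \<in> R23)"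

lemma separated_loop_expand:
  assumes min: "minimal_alt_loop x W"
  shows "separated_loop x (expand W)"
proof -
  have W: "alt_loop x W" using min by (simp add: minimal_alt_loop_def)
  have good: "\<forall>q\<in>set (pairs W). good q"
    using alt_loopD(5)[OF W] by (auto simp: in_set_pairs)
  note ne = alt_loopD(1)[OF W]
  note expand = expand[OF ne good] and pairs_expand = pairs_expand[OF ne good]
  have "x \<notin> inner_nodes W" "\<forall>q\<in>set (pairs W). x \<notin> inner_nodes (link q)"
    using minimal_alt_loop_inner_nodes[OF min] minimal_alt_loop_link_inner_nodes[OF min]
    by (auto simp: in_set_pairs)
  then have inner: "x \<notin> inner_nodes (expand W)"
    using inner_nodes_expand[OF ne good] by simp
  have "set (pairs (link q)) \<subseteq> R12 \<union> R13 \<union> R23 - R0" if "good q" for q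
    using link(5)[OF that] by (auto simp: leg_def split: if_splits)
  then have steps: "set (pairs (expand W)) \<subseteq> R12 \<union> R13 \<union> R23 - R0"
    using good by (auto simp: pairs_expand)
  have "successively (separated {R12, R13, R23}) (pairs (expand W))"
    unfolding pairs_expand
  proof (rule successively_concat)
    have "pairs (link q) \<noteq> [] \<and> successively (separated {R12, R13, R23}) (pairs (link q))"
      if "good q" for q
      using link(2,6)[OF that] by (simp add: pairs_eq_Nil_iff)
    then show "\<forall>ps\<in>set (map (pairs \<circ> link) (pairs W)).
        ps \<noteq> [] \<and> successively (separated {R12, R13, R23}) ps"
      using good by auto
    show "successively (\<lambda>ps qs. separated {R12, R13, R23} (last ps) (hd qs))
        (map (pairs \<circ> link) (pairs W))"
      using minimal_alt_loop_junction_separated[OF min]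
      by (simp add: successively_map successively_conv_nth nth_pairs)
  qed
  moreover have "\<exists>q\<in>set (pairs (expand W)). q \<in> R13" "\<exists>q\<in>set (pairs (expand W)). q \<in> R23"
    using expand_leg_step[OF W, of True] expand_leg_step[OF W, of False] by (simp_all add: leg_def)
  moreover have "3 \<le> length (expand W)" "hd (expand W) = x" "last (expand W) = x"
    using expand alt_loopD(4)[OF W] W by (auto simp: alt_loop_def)
  ultimately show ?thesis
    unfolding separated_loop_def using inner steps by blast
qed

section \<open>Triangle-reduced loops and the free product of the legs\<close>

lemma tri_Ri_sides: "tri_Ri R1 R2 R3 1 = R1" "tri_Ri R1 R2 R3 2 = R2" "tri_Ri R1 R2 R3 3 = R3"
  using R1_inter_R2 R1_inter_R3 R2_inter_R3 by (simp_all add: tri_Ri_def eqjoin_def)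

lemma tri_R0_sides: "tri_R0 R1 R2 R3 = R0"
  using R12_inter_R3 R1_inter_R2 by (auto simp: tri_R0_def)

lemma tri_piece_sides:
  "tri_piece R1 R2 R3 TE1 = {}" "tri_piece R1 R2 R3 TE2 = {}" "tri_piece R1 R2 R3 TE3 = {}"
  "tri_piece R1 R2 R3 TR12 = R12 - R0" "tri_piece R1 R2 R3 TR13 = R13 - R0"
  "tri_piece R1 R2 R3 TR23 = R23 - R0"
  by (simp_all only: tri_piece.simps tri_Ri_sides tri_R0_sides R1_inter_R2 R1_inter_R3 R2_inter_R3)
    auto

lemma tri_nbr_sides:
  "tri_nbr R1 R2 R3 TR12 = (R13 - R0) \<union> (R23 - R0)"
  "tri_nbr R1 R2 R3 TR13 = (R12 - R0) \<union> (R23 - R0)"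
  "tri_nbr R1 R2 R3 TR23 = (R12 - R0) \<union> (R13 - R0)"
  by (simp_all only: tri_nbr.simps tri_piece_sides) auto

lemma separated_loop_tri_reduced:
  assumes V: "separated_loop x V"
  shows "tri_reduced R1 R2 R3 V"
proof -
  define type where "type q = (if q \<in> R12 then TR12 else if q \<in> R13 then TR13 else TR23)" for q
  let ?P = "R12 \<union> R13 \<union> R23 - R0"
  have steps: "step V k \<in> ?P" if "k < length V - 1" for k
    using V step_in_set_pairs[OF that] by (auto simp: separated_loop_def)
  have sep: "separated {R12, R13, R23} (step V k) (step V (Suc k))" if "Suc k < length V - 1" for k
    using V that by (auto simp: separated_loop_def successively_conv_nth nth_pairs)
  have in_piece: "q \<in> tri_piece R1 R2 R3 (type q)" if "q \<in> ?P" for q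
    using that by (auto simp del: tri_piece.simps simp: type_def tri_piece_sides)
  have in_nbr: "r \<in> tri_nbr R1 R2 R3 (type q)"
    if "q \<in> ?P" "r \<in> ?P" "separated {R12, R13, R23} q r \<or> separated {R12, R13, R23} r q" for q r
    using that by (auto simp del: tri_nbr.simps simp: type_def tri_nbr_sides separated_def)
  show ?thesis
    unfolding tri_reduced_def
  proof (intro conjI allI impI)
    show "V \<noteq> []" using V by (auto simp: separated_loop_def)
    fix k assume k: "k < length V - 1"
    show "\<exists>t. step V k \<in> tri_piece R1 R2 R3 t \<and>
        (0 < k \<longrightarrow> step V (k - 1) \<in> tri_nbr R1 R2 R3 t) \<and>
        (Suc k < length V - 1 \<longrightarrow> step V (Suc k) \<in> tri_nbr R1 R2 R3 t)"
    proof (intro exI[of _ "type (step V k)"] conjI impI)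
      show "step V k \<in> tri_piece R1 R2 R3 (type (step V k))"
        using in_piece steps k by blast
      show "step V (k - 1) \<in> tri_nbr R1 R2 R3 (type (step V k))" if "0 < k"
        using in_nbr steps sep[of "k - 1"] that k by simp
      show "step V (Suc k) \<in> tri_nbr R1 R2 R3 (type (step V k))" if "Suc k < length V - 1"
        using in_nbr steps sep[of k] that k by simp
    qed
  qed
qed

lemma separated_loop_proper_II:
  assumes V: "separated_loop x V" and R12_step: "\<exists>q\<in>set (pairs V). q \<in> R12"
  shows "proper_II R1 R2 R3 V"
proof -
  have "set (pairs V) \<inter> R0 = {}" using V by (auto simp: separated_loop_def)
  then show ?thesis
    using V R12_step
    by (auto simp del: tri_piece.simps simp: proper_II_def tri_types_pairs tri_piece_sides separated_loop_def)
qed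

lemma separated_loop_not_concat_Ri_loops:
  assumes V: "separated_loop x V" and R12_step: "\<exists>q\<in>set (pairs V). q \<in> R12"
  shows "\<not> concat_Ri_loops R1 R2 R3 V"
proof
  assume "concat_Ri_loops R1 R2 R3 V"
  moreover have "hd V \<notin> inner_nodes V" using V by (simp add: separated_loop_def)
  ultimately obtain i where i: "i \<in> {1, 2, 3}" "set (pairs V) \<subseteq> tri_Ri R1 R2 R3 i"
    using concat_Ri_loops_single by blast
  have no_R0: "set (pairs V) \<inter> R0 = {}" using V by (auto simp: separated_loop_def)
  obtain q12 q13 q23 where q: "q12 \<in> set (pairs V)" "q12 \<in> R12" "q13 \<in> set (pairs V)"
    "q13 \<in> R13" "q23 \<in> set (pairs V)" "q23 \<in> R23"
    using V R12_step by (auto simp: separated_loop_def)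
  have "R23 \<inter> R1 \<subseteq> R0" "R13 \<inter> R2 \<subseteq> R0"
    using leg_inter_opposite_side[of False] leg_inter_opposite_side[of True] by (simp_all add: leg_def)
  note excluded = this R12_inter_R3
  from i consider "set (pairs V) \<subseteq> R1" | "set (pairs V) \<subseteq> R2" | "set (pairs V) \<subseteq> R3"
    by (elim insertE emptyE) (simp_all only: tri_Ri_sides)
  then show False
  proof cases
    case 1
    then show False using q(5,6) no_R0 excluded(1) by blast
  next
    case 2
    then show False using q(3,4) no_R0 excluded(2) by blast
  next
    case 3
    then show False using q(1,2) no_R0 excluded(3) by blast
  qed
qed

lemma separated_loop_reduced:
  assumes V: "separated_loop x V" and no_R12: "set (pairs V) \<inter> R12 = {}"
  shows "reduced R13 R23 R0 V"
proof -
  have steps: "step V k \<in> R13 \<union> R23 - R0" if "k < length V - 1" for k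
    using V no_R12 step_in_set_pairs[OF that] by (auto simp: separated_loop_def)
  have sep: "separated {R12, R13, R23} (step V k) (step V (Suc k))" if "Suc k < length V - 1" for k
    using V that by (auto simp: separated_loop_def successively_conv_nth nth_pairs)
  show ?thesis
    unfolding reduced_def
  proof (intro conjI impI)
    show "2 \<le> length V" using V by (simp add: separated_loop_def)
    show "\<exists>lab :: nat \<Rightarrow> bool. (\<forall>k < length V - 1. step V k \<in> (if lab k then R13 else R23)) \<and>
        (\<forall>k. Suc k < length V - 1 \<longrightarrow> lab k \<noteq> lab (Suc k))"
    proof (intro exI[of _ "\<lambda>k. step V k \<in> R13"] conjI allI impI)
      show "step V k \<in> (if step V k \<in> R13 then R13 else R23)" if "k < length V - 1" for k
        using steps[OF that] by auto
      show "(step V k \<in> R13) \<noteq> (step V (Suc k) \<in> R13)" if "Suc k < length V - 1" for k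
        using steps[of k] steps[of "Suc k"] sep[OF that] that by (auto simp: separated_def)
    qed
    show "\<forall>k < length V - 1. step V k \<notin> R0" using steps by blast
    show "V ! 0 \<noteq> V ! 1" if "length V = 2" using that V by (simp add: separated_loop_def)
  qed
qed

lemma no_alt_loop:
  assumes tri: "\<forall>xs. tri_reduced R1 R2 R3 xs \<and> proper_II R1 R2 R3 xs \<and> hd xs = x \<and> last xs = x
      \<longrightarrow> concat_Ri_loops R1 R2 R3 xs"
    and free: "\<forall>xs. reduced R13 R23 R0 xs \<and> hd xs = x \<longrightarrow> last xs \<noteq> x"
  shows "\<not> alt_loop x W"
proof
  assume "alt_loop x W"
  then obtain W' where "minimal_alt_loop x W'"
    using minimal_alt_loop_exists by blast
  then have V: "separated_loop x (expand W')"
    by (rule separated_loop_expand)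
  show False
  proof (cases "\<exists>q\<in>set (pairs (expand W')). q \<in> R12")
    case True
    moreover have "hd (expand W') = x" "last (expand W') = x"
      using V by (simp_all add: separated_loop_def)
    ultimately show False
      using tri separated_loop_tri_reduced[OF V] separated_loop_proper_II[OF V]
        separated_loop_not_concat_Ri_loops[OF V]
      by blast
  next
    case False
    then have "reduced R13 R23 R0 (expand W')"
      by (intro separated_loop_reduced[OF V]) auto
    then show False
      using free V by (auto simp: separated_loop_def)
  qed
qed

lemma alt_loop_if_reduced:
  assumes r: "reduced R1 R2 R12 xs" and ends: "hd xs = x" "last xs = x"
  shows "alt_loop x xs"
proof -
  have len: "2 < length xs"
    using reduced_loop_length[OF r] ends by simp
  obtain lab :: "nat \<Rightarrow> bool" where
    lab: "\<forall>k < length xs - 1. step xs k \<in> (if lab k then R1 else R2)"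
      "\<forall>k. Suc k < length xs - 1 \<longrightarrow> lab k \<noteq> lab (Suc k)"
    using r unfolding reduced_def by blast
  have not_R12: "step xs k \<notin> R12" if "k < length xs - 1" for k
    using r len that by (simp add: reduced_def)
  have in_side: "step xs k \<in> side (lab k)" if "k < length xs - 1" for k
  proof -
    have "step xs k \<in> (if lab k then R1 else R2)" using lab(1) that by blast
    then show ?thesis by (cases "lab k") (simp_all add: side_True side_False)
  qed
  have "label (step xs k) = lab k" if "k < length xs - 1" for k
    using label_eqI[OF in_side not_R12] that by simp
  then show ?thesis
    unfolding alt_loop_def using len ends lab(2) goodI[OF in_side not_R12] by auto
qed

lemma reduced_sides_if_reduced_legs:
  assumes r: "reduced R13 R23 R0 xs" and loop: "hd xs = last xs"
  shows "reduced R1 R2 R12 xs"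
proof -
  have len: "2 < length xs"
    using reduced_loop_length[OF r loop] .
  obtain lab :: "nat \<Rightarrow> bool" where
    lab: "\<forall>k < length xs - 1. step xs k \<in> (if lab k then R13 else R23)"
      "\<forall>k. Suc k < length xs - 1 \<longrightarrow> lab k \<noteq> lab (Suc k)"
    using r unfolding reduced_def by blast
  have "step xs k \<notin> R12 \<and> step xs k \<in> (if lab k then R1 else R2)" if "k < length xs - 1" for k
  proof -
    have "step xs k \<notin> R0" using r len that by (simp add: reduced_def)
    moreover have "step xs k \<in> (if lab k then R13 else R23)" using lab(1) that by blast
    moreover have "R13 \<subseteq> R1" "R23 \<subseteq> R2" by auto
    ultimately show ?thesis
      using R12_inter_R13 R12_inter_R23 by (cases "lab k") auto
  qed
  then show ?thesis
    unfolding reduced_def using len lab(2) by (intro conjI exI[of _ lab]) auto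
qed

lemma free_amalg_legs_if_free_amalg_sides:
  assumes "free_amalg M R1 R2 R12"
  shows "free_amalg M R13 R23 R0"
  using assms unfolding free_amalg_def
proof eventually_elim
  case (elim x)
  show ?case
  proof (intro allI impI notI)
    fix xs assume xs: "reduced R13 R23 R0 xs \<and> hd xs = x" "last xs = x"
    then have "reduced R1 R2 R12 xs"
      using reduced_sides_if_reduced_legs by simp
    then show False using elim xs by auto
  qed
qed

lemma free_amalg_sides_if_free_amalg_legs:
  assumes "triangle_join M R1 R2 R3" and "free_amalg M R13 R23 R0"
  shows "free_amalg M R1 R2 R12"
proof -
  have "AE x in M. \<forall>xs. tri_reduced R1 R2 R3 xs \<and> proper_II R1 R2 R3 xs \<and> hd xs = x \<and> last xs = x
      \<longrightarrow> concat_Ri_loops R1 R2 R3 xs"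
    using assms(1) by (simp add: triangle_join_def)
  with assms(2) show ?thesis
    unfolding free_amalg_def
  proof eventually_elim
    case (elim x)
    show ?case
    proof (intro allI impI notI)
      fix xs assume xs: "reduced R1 R2 R12 xs \<and> hd xs = x" "last xs = x"
      then have "alt_loop x xs"
        using alt_loop_if_reduced by simp
      then show False
        using no_alt_loop[OF elim(2,1)] by simp
    qed
  qed
qed

end

lemma join3_eq_eqjoin: "U \<subseteq> eqjoin S T \<Longrightarrow> join3 S T U = eqjoin S T"
  unfolding join3_def eqjoin_def by (rule rtrancl_subset) auto

theorem theorem4p4:
  fixes M :: "('a::polish_space) measure"
    and R12 R13 R23 R1 R2 R3 R0 R :: "('a \<times> 'a) set"
  assumes "std_nonatomic_prob M"
    and "SP1 M R12" and "SP1 M R13" and "SP1 M R23"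
    and "R1 = eqjoin R12 R13" and "R2 = eqjoin R12 R23" and "R3 = eqjoin R13 R23"
    and "R1 \<inter> R2 = R12" and "R1 \<inter> R3 = R13" and "R2 \<inter> R3 = R23"
    and "R0 = R12 \<inter> R13 \<inter> R23"
    and "R = join3 R1 R2 R3"
    and "minimal_triangle_join M R1 R2 R3"
  shows "R = eqjoin R1 R2 \<and> (is_free_join M R R1 R2 R12 \<longleftrightarrow> is_free_join M R3 R13 R23 R0)"
proof -
  have sides: "R1 = (R12 \<union> R13)\<^sup>*" "R2 = (R12 \<union> R23)\<^sup>*" "R3 = (R13 \<union> R23)\<^sup>*"
    using assms(5-7) by (simp_all add: eqjoin_def)
  interpret tri: equiv_triangle R12 R13 R23
    using assms(2-4,8-10) sides by unfold_locales (auto simp: SP1_def)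
  have "R3 \<subseteq> eqjoin R1 R2"
    unfolding sides eqjoin_def by (rule rtrancl_subset_rtrancl) auto
  then have "R = eqjoin R1 R2"
    using assms(12) by (simp add: join3_eq_eqjoin)
  moreover have "triangle_join M R1 R2 R3"
    using assms(13) by (simp add: minimal_triangle_join_def)
  then have "free_amalg M R1 R2 R12 \<longleftrightarrow> free_amalg M R13 R23 R0"
    using tri.free_amalg_legs_if_free_amalg_sides tri.free_amalg_sides_if_free_amalg_legs
    unfolding sides assms(11) by blast
  ultimately show ?thesis
    using assms(7) by (simp add: is_free_join_def)
qed

end
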